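(* Let $\Omega$ be a compact subset of $\mathbb{R}^d$ with a probability measure $\mu$, let $q\in[1,\infty)$, and let $X_N$ be a linear subspace of real-valued functions in $L_q(\Omega)$ defined at every point of $\Omega$. Let $\mathcal{C}_N=\{f=f_R+if_I: f_R,f_I\in X_N\}$. If $X_N\in\mathcal{M}(m,q,C_2,C_3)$, then $\mathcal{C}_N\in\mathcal{M}(m,q,C_22^{-q-1},C_32^{q+1})$.
   Context: $\|f\|_q=\left(\int_\Omega|f|^q\,d\mu\right)^{1/q}$. For a subspace $X$ of $L_q(\Omega)$, $X\in\mathcal{M}(m,q,C_2,C_3)$ (with positive constants $C_2\le C_3$) means that there exist points $\xi^1,\dots,\xi^m\in\Omega$ such that $C_2\|f\|_q^q\le\frac1m\sum_{j=1}^m|f(\xi^j)|^q\le C_3\|f\|_q^q$ for all $f\in X$. *)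

theory Defs
  imports "HOL-Analysis.Analysis" "HOL-Probability.Probability"
begin

definition real_fun_subspace :: "('a \<Rightarrow> real) set \<Rightarrow> bool" where
  "real_fun_subspace X \<longleftrightarrow>
     (\<lambda>x. 0) \<in> X \<and>
     (\<forall>f\<in>X. \<forall>g\<in>X. (\<lambda>x. f x + g x) \<in> X) \<and>
     (\<forall>c::real. \<forall>f\<in>X. (\<lambda>x. c * f x) \<in> X)"

definition Lq_pow :: "'a measure \<Rightarrow> real \<Rightarrow> ('a \<Rightarrow> 'b::real_normed_vector) \<Rightarrow> real" where
  "Lq_pow M q f = (\<integral>x. norm (f x) powr q \<partial>M)"

text \<open>Marcinkiewicz-type discretization class M(m,q,C2,C3): there are points
  xi^1..xi^m in Omega (here indexed by j < m) such that
  C2 ||f||_q^q <= (1/m) sum_j |f(xi^j)|^q <= C3 ||f||_q^q for all f in X.\<close>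
definition Mclass :: "'a measure \<Rightarrow> ('a \<Rightarrow> 'b::real_normed_vector) set \<Rightarrow> nat \<Rightarrow> real \<Rightarrow> real \<Rightarrow> real \<Rightarrow> bool" where
  "Mclass M X m q C2 C3 \<longleftrightarrow>
     (\<exists>\<xi>::nat \<Rightarrow> 'a. (\<forall>j<m. \<xi> j \<in> space M) \<and>
        (\<forall>f\<in>X. C2 * Lq_pow M q f \<le> (1 / real m) * (\<Sum>j<m. norm (f (\<xi> j)) powr q) \<and>
                 (1 / real m) * (\<Sum>j<m. norm (f (\<xi> j)) powr q) \<le> C3 * Lq_pow M q f))"

definition complexify :: "('a \<Rightarrow> real) set \<Rightarrow> ('a \<Rightarrow> complex) set" where
  "complexify X = {(\<lambda>x. complex_of_real (fR x) + \<i> * complex_of_real (fI x)) | fR fI. fR \<in> X \<and> fI \<in> X}"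

end

theory Submission
  imports Defs
begin

text \<open>Pointwise, |f|^q for f = f_R + i f_I lies between (|f_R|^q + |f_I|^q)/2 and
  2^q (|f_R|^q + |f_I|^q). Integration and the sample mean at the points xi^j are both monotone
  and linear, so the same two-sided bound holds for the L_q norm and for its discretisation.
  Applying the hypothesis to f_R and f_I separately and recombining costs exactly the factors
  2^(-q-1) and 2^(q+1).\<close>

lemma cmod_complex_powr_lower:
  fixes a b q :: real
  assumes "0 \<le> q"
  shows "(\<bar>a\<bar> powr q + \<bar>b\<bar> powr q) / 2 \<le> cmod (complex_of_real a + \<i> * complex_of_real b) powr q"
proof -
  have "\<bar>a\<bar> powr q \<le> cmod (Complex a b) powr q" "\<bar>b\<bar> powr q \<le> cmod (Complex a b) powr q"
    using abs_Re_le_cmod[of "Complex a b"] abs_Im_le_cmod[of "Complex a b"] assms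
    by (auto intro: powr_mono2)
  then show ?thesis
    by (simp flip: Complex_eq)
qed

lemma cmod_complex_powr_upper:
  fixes a b q :: real
  assumes "0 \<le> q"
  shows "cmod (complex_of_real a + \<i> * complex_of_real b) powr q \<le> 2 powr q * (\<bar>a\<bar> powr q + \<bar>b\<bar> powr q)"
proof -
  have "cmod (Complex a b) \<le> 2 * max \<bar>a\<bar> \<bar>b\<bar>"
    using cmod_le[of "Complex a b"] by simp
  then have "cmod (Complex a b) powr q \<le> (2 * max \<bar>a\<bar> \<bar>b\<bar>) powr q"
    using assms by (intro powr_mono2) auto
  also have "\<dots> = 2 powr q * max \<bar>a\<bar> \<bar>b\<bar> powr q"
    by (simp add: powr_mult)
  also have "max \<bar>a\<bar> \<bar>b\<bar> powr q \<le> \<bar>a\<bar> powr q + \<bar>b\<bar> powr q"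
    by (simp add: max_def)
  finally show ?thesis
    by (simp flip: Complex_eq)
qed

lemma Lq_pow_complex_bounds:
  fixes a b :: "'a \<Rightarrow> real" and q :: real
  defines "f \<equiv> \<lambda>x. complex_of_real (a x) + \<i> * complex_of_real (b x)"
  assumes "0 \<le> q"
    and a: "a \<in> borel_measurable M" "integrable M (\<lambda>x. \<bar>a x\<bar> powr q)"
    and b: "b \<in> borel_measurable M" "integrable M (\<lambda>x. \<bar>b x\<bar> powr q)"
  shows "(Lq_pow M q a + Lq_pow M q b) / 2 \<le> Lq_pow M q f"
    and "Lq_pow M q f \<le> 2 powr q * (Lq_pow M q a + Lq_pow M q b)"
proof -
  have ab: "integrable M (\<lambda>x. \<bar>a x\<bar> powr q + \<bar>b x\<bar> powr q)"
    using a b by auto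
  have f: "integrable M (\<lambda>x. norm (f x) powr q)"
  proof (rule Bochner_Integration.integrable_bound)
    show "integrable M (\<lambda>x. 2 powr q * (\<bar>a x\<bar> powr q + \<bar>b x\<bar> powr q))"
      using ab by simp
    show "(\<lambda>x. norm (f x) powr q) \<in> borel_measurable M"
      unfolding f_def using a b by measurable
    show "AE x in M. norm (norm (f x) powr q) \<le> norm (2 powr q * (\<bar>a x\<bar> powr q + \<bar>b x\<bar> powr q))"
      unfolding f_def using cmod_complex_powr_upper[OF \<open>0 \<le> q\<close>] by auto
  qed
  have "(Lq_pow M q a + Lq_pow M q b) / 2 = (\<integral>x. (\<bar>a x\<bar> powr q + \<bar>b x\<bar> powr q) / 2 \<partial>M)"
    unfolding Lq_pow_def using a b by simp
  also have "\<dots> \<le> Lq_pow M q f"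
    unfolding Lq_pow_def using ab f cmod_complex_powr_lower[OF \<open>0 \<le> q\<close>]
    by (intro integral_mono) (auto simp: f_def)
  finally show "(Lq_pow M q a + Lq_pow M q b) / 2 \<le> Lq_pow M q f" .
  have "Lq_pow M q f \<le> (\<integral>x. 2 powr q * (\<bar>a x\<bar> powr q + \<bar>b x\<bar> powr q) \<partial>M)"
    unfolding Lq_pow_def using ab f cmod_complex_powr_upper[OF \<open>0 \<le> q\<close>]
    by (intro integral_mono) (auto simp: f_def)
  also have "\<dots> = 2 powr q * (Lq_pow M q a + Lq_pow M q b)"
    unfolding Lq_pow_def using a b by simp
  finally show "Lq_pow M q f \<le> 2 powr q * (Lq_pow M q a + Lq_pow M q b)" .
qed

definition sample_mean :: "nat \<Rightarrow> (nat \<Rightarrow> 'a) \<Rightarrow> real \<Rightarrow> ('a \<Rightarrow> 'b::real_normed_vector) \<Rightarrow> real" where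
  "sample_mean m \<xi> q f = (1 / real m) * (\<Sum>j<m. norm (f (\<xi> j)) powr q)"

lemma Mclass_iff_sample_mean:
  "Mclass M X m q C2 C3 \<longleftrightarrow>
     (\<exists>\<xi>. (\<forall>j<m. \<xi> j \<in> space M) \<and>
        (\<forall>f\<in>X. C2 * Lq_pow M q f \<le> sample_mean m \<xi> q f \<and> sample_mean m \<xi> q f \<le> C3 * Lq_pow M q f))"
  unfolding Mclass_def sample_mean_def ..

lemma sample_mean_complex_bounds:
  fixes a b :: "'a \<Rightarrow> real" and q :: real
  defines "f \<equiv> \<lambda>x. complex_of_real (a x) + \<i> * complex_of_real (b x)"
  assumes "0 \<le> q"
  shows "(sample_mean m \<xi> q a + sample_mean m \<xi> q b) / 2 \<le> sample_mean m \<xi> q f"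
    and "sample_mean m \<xi> q f \<le> 2 powr q * (sample_mean m \<xi> q a + sample_mean m \<xi> q b)"
proof -
  have "(sample_mean m \<xi> q a + sample_mean m \<xi> q b) / 2
      = (1 / real m) * (\<Sum>j<m. (\<bar>a (\<xi> j)\<bar> powr q + \<bar>b (\<xi> j)\<bar> powr q) / 2)"
    unfolding sample_mean_def sum_divide_distrib[symmetric] sum.distrib
    by (cases "m = 0") (simp_all add: field_simps)
  also have "\<dots> \<le> sample_mean m \<xi> q f"
    unfolding sample_mean_def f_def using cmod_complex_powr_lower[OF assms(2)]
    by (intro mult_left_mono sum_mono) auto
  finally show "(sample_mean m \<xi> q a + sample_mean m \<xi> q b) / 2 \<le> sample_mean m \<xi> q f" .
  have "sample_mean m \<xi> q f \<le> (1 / real m) * (\<Sum>j<m. 2 powr q * (\<bar>a (\<xi> j)\<bar> powr q + \<bar>b (\<xi> j)\<bar> powr q))"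
    unfolding sample_mean_def f_def using cmod_complex_powr_upper[OF assms(2)]
    by (intro mult_left_mono sum_mono) auto
  also have "\<dots> = 2 powr q * (sample_mean m \<xi> q a + sample_mean m \<xi> q b)"
    unfolding sample_mean_def by (simp add: sum_distrib_left sum.distrib algebra_simps)
  finally show "sample_mean m \<xi> q f \<le> 2 powr q * (sample_mean m \<xi> q a + sample_mean m \<xi> q b)" .
qed

lemma two_sided_bounds_of_components:
  fixes La Lb Lf Sa Sb Sf C2 C3 P :: real
  assumes "0 < P" "0 \<le> C2" "0 \<le> C3"
    and L: "(La + Lb) / 2 \<le> Lf" "Lf \<le> P * (La + Lb)"
    and S: "(Sa + Sb) / 2 \<le> Sf" "Sf \<le> P * (Sa + Sb)"
    and a: "C2 * La \<le> Sa" "Sa \<le> C3 * La"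
    and b: "C2 * Lb \<le> Sb" "Sb \<le> C3 * Lb"
  shows "C2 / (2 * P) * Lf \<le> Sf" and "Sf \<le> C3 * (2 * P) * Lf"
proof -
  have "C2 / (2 * P) * Lf \<le> C2 / (2 * P) * (P * (La + Lb))"
    using L(2) assms(1,2) by (intro mult_left_mono) auto
  also have "\<dots> = (C2 * La + C2 * Lb) / 2"
    using assms(1) by (simp add: field_simps)
  also have "\<dots> \<le> Sf"
    using S(1) a(1) b(1) by simp
  finally show "C2 / (2 * P) * Lf \<le> Sf" .
  have "Sf \<le> P * (Sa + Sb)"
    by (fact S(2))
  also have "\<dots> \<le> P * (C3 * (La + Lb))"
    using a(2) b(2) assms(1) by (intro mult_left_mono) (simp_all add: distrib_left)
  also have "\<dots> \<le> P * (C3 * (2 * Lf))"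
    using L(1) assms(1,3) by (intro mult_left_mono) auto
  finally show "Sf \<le> C3 * (2 * P) * Lf"
    by (simp add: algebra_simps)
qed

theorem proposition2p1:
  fixes \<Omega> :: "'a::euclidean_space set"
    and M :: "'a measure"
    and X :: "('a \<Rightarrow> real) set"
    and m :: nat and q C2 C3 :: real
  assumes "compact \<Omega>"
    and "prob_space M"
    and "sets M = sets (restrict_space borel \<Omega>)"
    and "1 \<le> q"
    and "real_fun_subspace X"
    and "\<forall>f\<in>X. f \<in> borel_measurable M \<and> integrable M (\<lambda>x. \<bar>f x\<bar> powr q)"
    and "0 < C2" and "C2 \<le> C3"
    and "Mclass M X m q C2 C3"
  shows "Mclass M (complexify X) m q (C2 * 2 powr (- q - 1)) (C3 * 2 powr (q + 1))"
proof -
  obtain \<xi> where \<xi>: "\<forall>j<m. \<xi> j \<in> space M"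
    and disc: "\<forall>f\<in>X. C2 * Lq_pow M q f \<le> sample_mean m \<xi> q f \<and> sample_mean m \<xi> q f \<le> C3 * Lq_pow M q f"
    using assms(9) unfolding Mclass_iff_sample_mean by blast
  have scale: "2 powr (- q - 1) = 1 / (2 * 2 powr q)" "2 powr (q + 1) = 2 * 2 powr q"
    by (simp_all add: powr_diff powr_add powr_minus divide_simps)
  show ?thesis
    unfolding Mclass_iff_sample_mean
  proof (intro exI[of _ \<xi>] conjI ballI \<xi>)
    fix f assume "f \<in> complexify X"
    then obtain a b where f: "f = (\<lambda>x. complex_of_real (a x) + \<i> * complex_of_real (b x))"
      and "a \<in> X" "b \<in> X"
      unfolding complexify_def by blast
    have "0 \<le> q" "0 \<le> C2" "0 \<le> C3"
      using assms(4,7,8) by simp_all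
    have a: "a \<in> borel_measurable M" "integrable M (\<lambda>x. \<bar>a x\<bar> powr q)"
      and b: "b \<in> borel_measurable M" "integrable M (\<lambda>x. \<bar>b x\<bar> powr q)"
      using assms(6) \<open>a \<in> X\<close> \<open>b \<in> X\<close> by auto
    have disc_a: "C2 * Lq_pow M q a \<le> sample_mean m \<xi> q a" "sample_mean m \<xi> q a \<le> C3 * Lq_pow M q a"
      and disc_b: "C2 * Lq_pow M q b \<le> sample_mean m \<xi> q b" "sample_mean m \<xi> q b \<le> C3 * Lq_pow M q b"
      using disc \<open>a \<in> X\<close> \<open>b \<in> X\<close> by auto
    from two_sided_bounds_of_components[OF _ \<open>0 \<le> C2\<close> \<open>0 \<le> C3\<close>
        Lq_pow_complex_bounds[OF \<open>0 \<le> q\<close> a b] sample_mean_complex_bounds[OF \<open>0 \<le> q\<close>]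
        disc_a disc_b]
    show "C2 * 2 powr (- q - 1) * Lq_pow M q f \<le> sample_mean m \<xi> q f"
      "sample_mean m \<xi> q f \<le> C3 * 2 powr (q + 1) * Lq_pow M q f"
      unfolding f scale by simp_all
  qed
qed

end
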